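(* Let $\tilde W$ be the affine Coxeter group of type $\tilde G_2$ (Coxeter generators $r_1,r_2,r_3$ with $(r_1r_2)^6=1$, $(r_2r_3)^3=1$, $(r_1r_3)^2=1$), and let $X$ be a conjugacy class of involutions of $\tilde W$. Then the commuting involution graph $\mathcal{C}(\tilde W,X)$ is disconnected.
   Context: For a group $G$ and a set $X$ of involutions of $G$, the commuting involution graph $\mathcal{C}(G,X)$ has vertex set $X$, with distinct $x,y\in X$ joined by an edge whenever $xy=yx$. *)

theory Defs
  imports "HOL-Algebra.Group"
begin

text \<open>Affine Coxeter group of type G2~, given by its Coxeter presentation:
 generators r1 r2 r3 (encoded as 1 2 3), relations r_i^2 = 1,
 (r1 r2)^6 = 1, (r2 r3)^3 = 1, (r1 r3)^2 = 1.  Elements are classes of words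
 modulo the congruence generated by the relations.\<close>

definition G2_gens :: "nat set" where
  "G2_gens = {1, 2, 3}"

fun G2_m :: "nat \<Rightarrow> nat \<Rightarrow> nat" where
  "G2_m i j = (if {i, j} = {1, 2} then 6
              else if {i, j} = {2, 3} then 3
              else if {i, j} = {1, 3} then 2
              else 1)"

inductive G2_weq :: "nat list \<Rightarrow> nat list \<Rightarrow> bool" where
  refl: "G2_weq w w"
| sym: "G2_weq v w \<Longrightarrow> G2_weq w v"
| trans: "G2_weq u v \<Longrightarrow> G2_weq v w \<Longrightarrow> G2_weq u w"
| square: "i \<in> G2_gens \<Longrightarrow> G2_weq (xs @ [i, i] @ ys) (xs @ ys)"
| braid: "i \<in> G2_gens \<Longrightarrow> j \<in> G2_gens \<Longrightarrow> i \<noteq> j \<Longrightarrow>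
           G2_weq (xs @ concat (replicate (G2_m i j) [i, j]) @ ys) (xs @ ys)"

definition G2_words :: "nat list set" where
  "G2_words = {w. set w \<subseteq> G2_gens}"

definition G2_cls :: "nat list \<Rightarrow> nat list set" where
  "G2_cls w = {v \<in> G2_words. G2_weq w v}"

definition affine_G2 :: "nat list set monoid" where
  "affine_G2 = \<lparr> carrier = G2_cls ` G2_words,
                 mult = (\<lambda>A B. G2_cls ((SOME a. a \<in> A) @ (SOME b. b \<in> B))),
                 one = G2_cls [] \<rparr>"

definition involution :: "('a, 'b) monoid_scheme \<Rightarrow> 'a \<Rightarrow> bool" where
  "involution G x \<longleftrightarrow> x \<in> carrier G \<and> x \<noteq> \<one>\<^bsub>G\<^esub> \<and> x \<otimes>\<^bsub>G\<^esub> x = \<one>\<^bsub>G\<^esub>"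

definition conj_class :: "('a, 'b) monoid_scheme \<Rightarrow> 'a \<Rightarrow> 'a set" where
  "conj_class G x = {g \<otimes>\<^bsub>G\<^esub> x \<otimes>\<^bsub>G\<^esub> inv\<^bsub>G\<^esub> g | g. g \<in> carrier G}"

definition cig_edge :: "('a, 'b) monoid_scheme \<Rightarrow> 'a set \<Rightarrow> 'a \<Rightarrow> 'a \<Rightarrow> bool" where
  "cig_edge G X x y \<longleftrightarrow> x \<in> X \<and> y \<in> X \<and> x \<noteq> y \<and> x \<otimes>\<^bsub>G\<^esub> y = y \<otimes>\<^bsub>G\<^esub> x"

definition cig_connected :: "('a, 'b) monoid_scheme \<Rightarrow> 'a set \<Rightarrow> bool" where
  "cig_connected G X \<longleftrightarrow> (\<forall>x\<in>X. \<forall>y\<in>X. (cig_edge G X)\<^sup>*\<^sup>* x y)"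

end

theory Submission
  imports Defs "HOL-Library.Product_Plus"
begin

(* The generators act on the plane by the affine maps affine_gen below: the linear parts form
   the dihedral group of order 12 and the translations the lattice Z^2.  This representation is
   faithful, since every element has the normal form tau1^a tau2^b w(M) with w(M) a fixed word
   for the linear part M; this needs only finitely many word identities, each checked by a
   certificate of rewriting moves.
   If two distinct involutions of one conjugacy class commuted, their linear parts would be
   commuting conjugate involutions of the finite Weyl group, hence equal, and two commuting
   affine involutions with the same linear part coincide.  So no two vertices are adjacent, while
   conjugating t by a unit translation not fixed by its linear part gives a second vertex. *)



section \<open>Conjugacy classes and commuting involution graphs\<close>

context group
begin

lemma inv_mult_cancel_left: "g \<in> carrier G \<Longrightarrow> x \<in> carrier G \<Longrightarrow> inv g \<otimes> (g \<otimes> x) = x"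
  by (simp add: m_assoc [symmetric])

lemma conj_int_pow:
  assumes "g \<in> carrier G" and "x \<in> carrier G"
  shows "g \<otimes> x [^] (k::int) \<otimes> inv g = (g \<otimes> x \<otimes> inv g) [^] k"
proof -
  have "(\<lambda>y. g \<otimes> y \<otimes> inv g) \<in> hom G G"
    using assms(1) by (intro homI) (simp_all add: m_assoc inv_mult_cancel_left)
  from hom_int_pow[OF this assms(2) is_group is_group] show ?thesis .
qed

lemma conj_eq_iff_commute:
  assumes "g \<in> carrier G" and "x \<in> carrier G"
  shows "g \<otimes> x \<otimes> inv g = x \<longleftrightarrow> g \<otimes> x = x \<otimes> g"
  using assms by (simp add: inv_solve_right')

lemma int_pow_commute:
  assumes "x \<otimes> y = y \<otimes> x" and "x \<in> carrier G" and "y \<in> carrier G"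
  shows "x [^] (a::int) \<otimes> y [^] (b::int) = y [^] b \<otimes> x [^] a"
proof -
  have "y \<otimes> x \<otimes> inv y = x"
    using assms by (simp add: conj_eq_iff_commute)
  then have "y \<otimes> x [^] a \<otimes> inv y = x [^] a"
    using assms by (simp add: conj_int_pow)
  then have "x [^] a \<otimes> y \<otimes> inv (x [^] a) = y"
    using assms by (simp add: conj_eq_iff_commute)
  then have "x [^] a \<otimes> y [^] b \<otimes> inv (x [^] a) = y [^] b"
    using assms by (simp add: conj_int_pow)
  then show ?thesis
    using assms by (simp add: conj_eq_iff_commute)
qed

lemma conj_class_self: "t \<in> carrier G \<Longrightarrow> t \<in> conj_class G t"
  unfolding conj_class_def by (auto intro!: exI[of _ \<one>])

lemma conj_class_conj:
  assumes "a \<in> conj_class G t" and "b \<in> conj_class G t" and "t \<in> carrier G"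
  obtains k where "k \<in> carrier G" and "b = k \<otimes> a \<otimes> inv k"
proof -
  obtain g h where g: "g \<in> carrier G" "a = g \<otimes> t \<otimes> inv g"
    and h: "h \<in> carrier G" "b = h \<otimes> t \<otimes> inv h"
    using assms(1,2) by (auto simp: conj_class_def)
  have "h \<otimes> inv g \<otimes> a \<otimes> inv (h \<otimes> inv g) = b"
    using g h assms(3) by (simp add: inv_mult_group m_assoc inv_mult_cancel_left)
  then show ?thesis
    using that g h by blast
qed

lemma involution_conj_class:
  assumes "involution G t" and "x \<in> conj_class G t"
  shows "involution G x"
proof -
  obtain g where g: "g \<in> carrier G" "x = g \<otimes> t \<otimes> inv g"
    using assms(2) by (auto simp: conj_class_def)
  have t: "t \<in> carrier G" "t \<noteq> \<one>" "t \<otimes> t = \<one>"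
    using assms(1) by (auto simp: involution_def)
  have "x \<otimes> x = g \<otimes> (t \<otimes> t) \<otimes> inv g"
    using g t(1) by (simp add: m_assoc inv_mult_cancel_left)
  moreover have "t = inv g \<otimes> x \<otimes> g"
    using g t(1) by (simp add: m_assoc inv_mult_cancel_left)
  then have "x \<noteq> \<one>"
    using g t by auto
  ultimately show ?thesis
    using g t by (simp add: involution_def)
qed

end

lemma not_cig_connected_if_no_edges:
  assumes "x \<in> X" and "y \<in> X" and "x \<noteq> y" and "\<And>a b. \<not> cig_edge G X a b"
  shows "\<not> cig_connected G X"
proof
  assume "cig_connected G X"
  then have "(cig_edge G X)\<^sup>*\<^sup>* x y"
    using assms(1,2) by (simp add: cig_connected_def)
  then show False
    using assms(3,4) by (cases rule: rtranclp.cases) auto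
qed

section \<open>Words in the Coxeter generators\<close>

lemma replicate_numeral: "replicate (numeral k) x = x # replicate (pred_numeral k) x"
  by (simp add: numeral_eq_Suc)

lemma G2_weq_append_left: "G2_weq u v \<Longrightarrow> G2_weq (w @ u) (w @ v)"
proof (induction rule: G2_weq.induct)
  case (square i xs ys)
  then show ?case using G2_weq.square[of i "w @ xs" ys] by simp
next
  case (braid i j xs ys)
  then show ?case using G2_weq.braid[of i j "w @ xs" ys] by simp
qed (auto intro: G2_weq.intros)

lemma G2_weq_append_right: "G2_weq u v \<Longrightarrow> G2_weq (u @ w) (v @ w)"
proof (induction rule: G2_weq.induct)
  case (square i xs ys)
  then show ?case using G2_weq.square[of i xs "ys @ w"] by simp
next
  case (braid i j xs ys)
  then show ?case using G2_weq.braid[of i j xs "ys @ w"] by simp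
qed (auto intro: G2_weq.intros)

lemma G2_weq_append: "G2_weq u v \<Longrightarrow> G2_weq u' v' \<Longrightarrow> G2_weq (u @ u') (v @ v')"
  by (meson G2_weq.trans G2_weq_append_left G2_weq_append_right)

lemma G2_weq_rev_append_self: "set w \<subseteq> G2_gens \<Longrightarrow> G2_weq (rev w @ w) []"
proof (induction w)
  case Nil
  then show ?case by (simp add: G2_weq.refl)
next
  case (Cons i w)
  have "G2_weq (rev w @ [i, i] @ w) (rev w @ w)"
    using Cons.prems G2_weq.square[of i "rev w" w] by simp
  then show ?case using Cons by (auto intro: G2_weq.trans)
qed

lemma G2_weq_if_append_rev_trivial:
  assumes "G2_weq (u @ rev v) []" and "set v \<subseteq> G2_gens"
  shows "G2_weq u v"
proof -
  have "G2_weq (u @ rev v @ v) u"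
    using G2_weq_append_left[OF G2_weq_rev_append_self[OF assms(2)], of u] by simp
  moreover have "G2_weq ((u @ rev v) @ v) v"
    using G2_weq_append_right[OF assms(1), of v] by simp
  ultimately show ?thesis by (auto intro: G2_weq.trans G2_weq.sym)
qed

lemma G2_weq_braid_word:
  "i \<in> G2_gens \<Longrightarrow> j \<in> G2_gens \<Longrightarrow> i \<noteq> j \<Longrightarrow> G2_weq (concat (replicate (G2_m i j) [i, j])) []"
  using G2_weq.braid[of i j "[]" "[]"] by simp

fun cancel_letter :: "nat \<Rightarrow> nat list \<Rightarrow> nat list" where
  "cancel_letter i [] = [i]"
| "cancel_letter i (j # w) = (if i = j \<and> i \<in> G2_gens then w else i # j # w)"

fun free_reduce :: "nat list \<Rightarrow> nat list" where
  "free_reduce [] = []"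
| "free_reduce (i # w) = cancel_letter i (free_reduce w)"

lemma G2_weq_cancel_letter: "G2_weq (i # w) (cancel_letter i w)"
  using G2_weq.square[of i "[]" "tl w"] by (cases w) (auto simp: G2_weq.refl)

lemma G2_weq_free_reduce: "G2_weq w (free_reduce w)"
proof (induction w)
  case Nil
  then show ?case by (simp add: G2_weq.refl)
next
  case (Cons i w)
  have "G2_weq (i # w) (i # free_reduce w)"
    using G2_weq_append_left[OF Cons.IH, of "[i]"] by simp
  then show ?case using G2_weq_cancel_letter by (auto intro: G2_weq.trans)
qed

(* Certificates for word identities: a move inserts a square [i, i], deletes a square, or deletes
   a braid relator (i j)^m at the given position. *)
datatype move = Insert_square nat nat | Delete_square nat nat | Delete_braid nat nat nat

fun apply_move :: "move \<Rightarrow> nat list \<Rightarrow> nat list option" where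
  "apply_move (Insert_square p i) w =
     (if p \<le> length w \<and> i \<in> G2_gens then Some (take p w @ [i, i] @ drop p w) else None)"
| "apply_move (Delete_square p i) w =
     (if i \<in> G2_gens \<and> take 2 (drop p w) = [i, i] then Some (take p w @ drop (p + 2) w) else None)"
| "apply_move (Delete_braid p i j) w =
     (if i \<in> G2_gens \<and> j \<in> G2_gens \<and> i \<noteq> j \<and>
         take (2 * G2_m i j) (drop p w) = concat (replicate (G2_m i j) [i, j])
      then Some (take p w @ drop (p + 2 * G2_m i j) w) else None)"

fun run_moves :: "move list \<Rightarrow> nat list \<Rightarrow> nat list option" where
  "run_moves [] w = Some w"
| "run_moves (m # ms) w = Option.bind (apply_move m w) (run_moves ms)"

lemma G2_weq_apply_move: "apply_move m w = Some w' \<Longrightarrow> G2_weq w w'"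
proof (cases m)
  case (Insert_square p i)
  assume "apply_move m w = Some w'"
  then have "i \<in> G2_gens" "w' = take p w @ [i, i] @ drop p w"
    using Insert_square by (auto split: if_splits)
  then show ?thesis
    using G2_weq.square[of i "take p w" "drop p w"] by (auto intro: G2_weq.sym)
next
  case (Delete_square p i)
  assume "apply_move m w = Some w'"
  then have i: "i \<in> G2_gens" "w' = take p w @ drop (p + 2) w" "take 2 (drop p w) = [i, i]"
    using Delete_square by (auto split: if_splits)
  have "w = take p w @ take 2 (drop p w) @ drop 2 (drop p w)"
    by (simp only: append_take_drop_id)
  also have "\<dots> = take p w @ [i, i] @ drop (p + 2) w"
    using i by (simp add: add.commute)
  finally show ?thesis
    using G2_weq.square[of i "take p w" "drop (p + 2) w"] i by simp
next
  case (Delete_braid p i j)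
  assume "apply_move m w = Some w'"
  then have i: "i \<in> G2_gens" "j \<in> G2_gens" "i \<noteq> j" "w' = take p w @ drop (p + 2 * G2_m i j) w"
    "take (2 * G2_m i j) (drop p w) = concat (replicate (G2_m i j) [i, j])"
    using Delete_braid by (auto split: if_splits)
  have "w = take p w @ take (2 * G2_m i j) (drop p w) @ drop (2 * G2_m i j) (drop p w)"
    by (simp only: append_take_drop_id)
  also have "\<dots> = take p w @ concat (replicate (G2_m i j) [i, j]) @ drop (p + 2 * G2_m i j) w"
    using i by (simp add: add.commute)
  finally show ?thesis
    using G2_weq.braid[of i j "take p w" "drop (p + 2 * G2_m i j) w"] i by simp
qed

lemma G2_weq_run_moves: "run_moves ms w = Some w' \<Longrightarrow> G2_weq w w'"
proof (induction ms arbitrary: w)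
  case Nil
  then show ?case by (simp add: G2_weq.refl)
next
  case (Cons m ms)
  then obtain w1 where "apply_move m w = Some w1" "run_moves ms w1 = Some w'"
    by (auto split: Option.bind_splits)
  then show ?case using Cons G2_weq_apply_move by (blast intro: G2_weq.trans)
qed

lemma G2_weq_by_moves:
  assumes "run_moves ms (u @ rev v) = Some w" and "free_reduce w = []" and "set v \<subseteq> G2_gens"
  shows "G2_weq u v"
proof (rule G2_weq_if_append_rev_trivial[OF _ assms(3)])
  show "G2_weq (u @ rev v) []"
    using G2_weq_run_moves[OF assms(1)] G2_weq_free_reduce[of w] assms(2) by (auto intro: G2_weq.trans)
qed

lemmas word_check_simps = G2_gens_def doubleton_eq_iff replicate_numeral

abbreviation affine_G2_mult :: "nat list set \<Rightarrow> nat list set \<Rightarrow> nat list set" (infixl \<open>\<cdot>\<close> 70)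
  where "x \<cdot> y \<equiv> x \<otimes>\<^bsub>affine_G2\<^esub> y"

lemma G2_words_iff: "w \<in> G2_words \<longleftrightarrow> set w \<subseteq> G2_gens"
  by (simp add: G2_words_def)

lemma G2_cls_eqI: "G2_weq u v \<Longrightarrow> G2_cls u = G2_cls v"
  unfolding G2_cls_def by (auto intro: G2_weq.trans G2_weq.sym)

lemma G2_cls_self: "u \<in> G2_words \<Longrightarrow> u \<in> G2_cls u"
  unfolding G2_cls_def by (simp add: G2_weq.refl)

lemma carrier_affine_G2: "carrier affine_G2 = G2_cls ` G2_words"
  by (simp add: affine_G2_def)

lemma one_affine_G2: "\<one>\<^bsub>affine_G2\<^esub> = G2_cls []"
  by (simp add: affine_G2_def)

lemma mult_affine_G2:
  assumes "u \<in> G2_words" and "v \<in> G2_words"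
  shows "G2_cls u \<cdot> G2_cls v = G2_cls (u @ v)"
proof -
  have "(SOME a. a \<in> G2_cls u) \<in> G2_cls u" "(SOME b. b \<in> G2_cls v) \<in> G2_cls v"
    using G2_cls_self assms by (metis someI)+
  then have "G2_weq (u @ v) ((SOME a. a \<in> G2_cls u) @ (SOME b. b \<in> G2_cls v))"
    by (simp add: G2_cls_def G2_weq_append)
  then show ?thesis
    by (simp add: affine_G2_def G2_cls_eqI)
qed

lemma group_affine_G2: "group affine_G2"
proof (rule groupI)
  fix x y
  assume "x \<in> carrier affine_G2" "y \<in> carrier affine_G2"
  then show "x \<cdot> y \<in> carrier affine_G2"
    by (auto simp: carrier_affine_G2 mult_affine_G2 G2_words_iff)
next
  show "\<one>\<^bsub>affine_G2\<^esub> \<in> carrier affine_G2"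
    by (simp add: carrier_affine_G2 one_affine_G2 G2_words_iff)
next
  fix x y z
  assume "x \<in> carrier affine_G2" "y \<in> carrier affine_G2" "z \<in> carrier affine_G2"
  then show "x \<cdot> y \<cdot> z =
      x \<cdot> (y \<cdot> z)"
    by (auto simp: carrier_affine_G2 mult_affine_G2 G2_words_iff)
next
  fix x
  assume "x \<in> carrier affine_G2"
  then show "\<one>\<^bsub>affine_G2\<^esub> \<cdot> x = x"
    by (auto simp: carrier_affine_G2 one_affine_G2 mult_affine_G2 G2_words_iff)
next
  fix x
  assume "x \<in> carrier affine_G2"
  then obtain u where u: "set u \<subseteq> G2_gens" "x = G2_cls u"
    by (auto simp: carrier_affine_G2 G2_words_iff)
  then have "G2_cls (rev u) \<cdot> x = \<one>\<^bsub>affine_G2\<^esub>"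
    by (simp add: mult_affine_G2 G2_words_iff one_affine_G2 G2_cls_eqI G2_weq_rev_append_self)
  moreover have "G2_cls (rev u) \<in> carrier affine_G2"
    using u by (simp add: carrier_affine_G2 G2_words_iff)
  ultimately show "\<exists>y\<in>carrier affine_G2. y \<cdot> x = \<one>\<^bsub>affine_G2\<^esub>"
    by blast
qed

interpretation affine_G2: group affine_G2
  by (rule group_affine_G2)

lemma G2_cls_in_carrier: "u \<in> G2_words \<Longrightarrow> G2_cls u \<in> carrier affine_G2"
  by (simp add: carrier_affine_G2)

lemma inv_affine_G2:
  assumes "u \<in> G2_words"
  shows "inv\<^bsub>affine_G2\<^esub> (G2_cls u) = G2_cls (rev u)"
proof (rule affine_G2.inv_equality)
  show "G2_cls (rev u) \<cdot> G2_cls u = \<one>\<^bsub>affine_G2\<^esub>"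
    using assms by (simp add: mult_affine_G2 G2_words_iff one_affine_G2 G2_cls_eqI G2_weq_rev_append_self)
qed (use assms in \<open>simp_all add: G2_cls_in_carrier G2_words_iff\<close>)

section \<open>An affine representation\<close>

(* (a, b, c, d) is the matrix with rows (a, b) and (c, d), and (M, v) is the map x \<mapsto> M x + v. *)
type_synonym vec2 = "int \<times> int"

type_synonym mat2 = "int \<times> int \<times> int \<times> int"

type_synonym aff2 = "mat2 \<times> vec2"

fun mat2_mult :: "mat2 \<Rightarrow> mat2 \<Rightarrow> mat2" where
  "mat2_mult (a, b, c, d) (e, f, g, h) = (a * e + b * g, a * f + b * h, c * e + d * g, c * f + d * h)"

fun mat2_apply :: "mat2 \<Rightarrow> vec2 \<Rightarrow> vec2" where
  "mat2_apply (a, b, c, d) (x, y) = (a * x + b * y, c * x + d * y)"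

definition mat2_id :: mat2 where
  "mat2_id = (1, 0, 0, 1)"

(* The inverse of a matrix of determinant \<delta> = 1 or \<delta> = -1, where 1 / \<delta> = \<delta>. *)
fun mat2_inv :: "mat2 \<Rightarrow> mat2" where
  "mat2_inv (a, b, c, d) = (let \<delta> = a * d - b * c in (\<delta> * d, - \<delta> * b, - \<delta> * c, \<delta> * a))"

fun aff2_comp :: "aff2 \<Rightarrow> aff2 \<Rightarrow> aff2" where
  "aff2_comp (M, u) (N, v) = (mat2_mult M N, mat2_apply M v + u)"

definition aff2_transl :: "vec2 \<Rightarrow> aff2" where
  "aff2_transl v = (mat2_id, v)"

definition aff2_id :: aff2 where
  "aff2_id = aff2_transl (0, 0)"

lemma mat2_mult_assoc: "mat2_mult (mat2_mult A B) C = mat2_mult A (mat2_mult B C)"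
  by (cases A rule: prod_cases4; cases B rule: prod_cases4; cases C rule: prod_cases4)
    (simp add: algebra_simps)

lemma mat2_mult_id [simp]: "mat2_mult mat2_id A = A" "mat2_mult A mat2_id = A"
  by (cases A rule: prod_cases4; simp add: mat2_id_def)+

lemma mat2_apply_id [simp]: "mat2_apply mat2_id v = v"
  by (cases v) (simp add: mat2_id_def)

lemma fst_aff2_comp: "fst (aff2_comp X Y) = mat2_mult (fst X) (fst Y)"
  by (cases X; cases Y) simp

lemma fst_aff2_id [simp]: "fst aff2_id = mat2_id"
  by (simp add: aff2_id_def aff2_transl_def)

lemma mat2_apply_mult: "mat2_apply (mat2_mult A B) v = mat2_apply A (mat2_apply B v)"
  by (cases A rule: prod_cases4; cases B rule: prod_cases4; cases v) (simp add: algebra_simps)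

lemma mat2_apply_add: "mat2_apply A (u + v) = mat2_apply A u + mat2_apply A v"
  by (cases A rule: prod_cases4; cases u; cases v) (simp add: algebra_simps)

lemma aff2_comp_assoc: "aff2_comp (aff2_comp X Y) Z = aff2_comp X (aff2_comp Y Z)"
  by (cases X; cases Y; cases Z) (simp add: mat2_mult_assoc mat2_apply_mult mat2_apply_add add.assoc)

lemma aff2_comp_id [simp]: "aff2_comp aff2_id X = X" "aff2_comp X aff2_id = X"
   apply (cases X; simp add: aff2_id_def aff2_transl_def)
  by (cases X; cases "fst X" rule: prod_cases4; simp add: aff2_id_def aff2_transl_def)

(* r1 and r2 act linearly and r3 as an affine reflection, in coordinates with respect to the
   unit translations tau1 and tau2 below. *)
definition affine_gen :: "nat \<Rightarrow> aff2" where
  "affine_gen i =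
     (if i = 1 then ((1, 1, 0, -1), (0, 0))
      else if i = 2 then ((1, 0, -1, -1), (0, 0))
      else if i = 3 then ((-1, -1, 0, 1), (1, 0))
      else aff2_id)"

fun affine_word :: "nat list \<Rightarrow> aff2" where
  "affine_word [] = aff2_id"
| "affine_word (i # w) = aff2_comp (affine_gen i) (affine_word w)"

lemma affine_word_append: "affine_word (u @ v) = aff2_comp (affine_word u) (affine_word v)"
  by (induction u) (simp_all add: aff2_comp_assoc)

lemma affine_word_G2_weq: "G2_weq u v \<Longrightarrow> affine_word u = affine_word v"
proof (induction rule: G2_weq.induct)
  case (square i xs ys)
  then have "aff2_comp (affine_gen i) (affine_gen i) = aff2_id"
    by (auto simp: G2_gens_def affine_gen_def aff2_id_def aff2_transl_def mat2_id_def)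
  then show ?case
    by (simp add: affine_word_append aff2_comp_assoc [symmetric])
next
  case (braid i j xs ys)
  then have "affine_word (concat (replicate (G2_m i j) [i, j])) = aff2_id"
    by (auto simp: word_check_simps affine_gen_def aff2_id_def aff2_transl_def mat2_id_def)
  then show ?case
    by (simp add: affine_word_append)
qed auto

definition affine_rep :: "nat list set \<Rightarrow> aff2" where
  "affine_rep x = affine_word (SOME w. w \<in> x)"

lemma affine_rep_G2_cls: "u \<in> G2_words \<Longrightarrow> affine_rep (G2_cls u) = affine_word u"
  unfolding affine_rep_def
  by (metis (mono_tags, lifting) G2_cls_def G2_cls_self affine_word_G2_weq mem_Collect_eq someI)

lemma affine_rep_mult:
  "x \<in> carrier affine_G2 \<Longrightarrow> y \<in> carrier affine_G2 \<Longrightarrow>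
   affine_rep (x \<cdot> y) = aff2_comp (affine_rep x) (affine_rep y)"
  by (auto simp: carrier_affine_G2 mult_affine_G2 affine_rep_G2_cls G2_words_iff affine_word_append)

lemma affine_rep_one: "affine_rep \<one>\<^bsub>affine_G2\<^esub> = aff2_id"
  by (simp add: one_affine_G2 affine_rep_G2_cls G2_words_iff)

section \<open>The finite Weyl group\<close>

(* The linear parts form the dihedral group of order 12; each element comes with a reduced word
   in r1 and r2. *)
definition weyl_words :: "(mat2 \<times> nat list) list" where
  "weyl_words =
    [((1, 0, 0, 1), []), ((1, 1, 0, -1), [1]), ((1, 0, -1, -1), [2]), ((1, 1, -1, 0), [2, 1]),
     ((0, -1, 1, 1), [1, 2]), ((0, 1, 1, 0), [1, 2, 1]), ((0, -1, -1, 0), [2, 1, 2]),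
     ((0, 1, -1, -1), [2, 1, 2, 1]), ((-1, -1, 1, 0), [1, 2, 1, 2]), ((-1, 0, 1, 1), [1, 2, 1, 2, 1]),
     ((-1, -1, 0, 1), [2, 1, 2, 1, 2]), ((-1, 0, 0, -1), [2, 1, 2, 1, 2, 1])]"

definition weyl_group :: "mat2 set" where
  "weyl_group = fst ` set weyl_words"

definition weyl_word :: "mat2 \<Rightarrow> nat list" where
  "weyl_word M = (case map_of weyl_words M of Some w \<Rightarrow> w | None \<Rightarrow> [])"

lemma weyl_group_cases:
  assumes "M \<in> weyl_group"
  shows "M = (1, 0, 0, 1) \<or> M = (1, 1, 0, -1) \<or> M = (1, 0, -1, -1) \<or> M = (1, 1, -1, 0) \<or>
    M = (0, -1, 1, 1) \<or> M = (0, 1, 1, 0) \<or> M = (0, -1, -1, 0) \<or> M = (0, 1, -1, -1) \<or>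
    M = (-1, -1, 1, 0) \<or> M = (-1, 0, 1, 1) \<or> M = (-1, -1, 0, 1) \<or> M = (-1, 0, 0, -1)"
  using assms by (simp add: weyl_group_def weyl_words_def)

lemma weyl_word_in_G2_words: "weyl_word M \<in> G2_words"
proof (cases "map_of weyl_words M")
  case (Some w)
  then have "(M, w) \<in> set weyl_words"
    by (rule map_of_SomeD)
  then show ?thesis
    using Some by (auto simp: weyl_word_def weyl_words_def G2_words_iff G2_gens_def)
qed (simp add: weyl_word_def G2_words_iff)

lemma mat2_id_in_weyl_group: "mat2_id \<in> weyl_group"
  by (simp add: weyl_group_def weyl_words_def mat2_id_def)

lemma weyl_group_mult_gen:
  "s \<in> G2_gens \<Longrightarrow> M \<in> weyl_group \<Longrightarrow> mat2_mult (fst (affine_gen s)) M \<in> weyl_group"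
  by (drule weyl_group_cases) (auto simp: G2_gens_def affine_gen_def weyl_group_def weyl_words_def)

lemma weyl_group_mult_word:
  "set u \<subseteq> G2_gens \<Longrightarrow> M \<in> weyl_group \<Longrightarrow> mat2_mult (fst (affine_word u)) M \<in> weyl_group"
  by (induction u) (simp_all add: aff2_id_def aff2_transl_def fst_aff2_comp mat2_mult_assoc weyl_group_mult_gen)

lemma affine_word_in_weyl_group: "set u \<subseteq> G2_gens \<Longrightarrow> fst (affine_word u) \<in> weyl_group"
  using weyl_group_mult_word[OF _ mat2_id_in_weyl_group] by simp

lemma affine_rep_in_weyl_group: "x \<in> carrier affine_G2 \<Longrightarrow> fst (affine_rep x) \<in> weyl_group"
  by (auto simp: carrier_affine_G2 affine_rep_G2_cls G2_words_iff affine_word_in_weyl_group)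

lemma free_reduce_dihedral_step:
  "\<forall>s\<in>{1, 2}. \<forall>M\<in>weyl_group.
     free_reduce ([s] @ weyl_word M @ rev (weyl_word (mat2_mult (fst (affine_gen s)) M)))
       \<in> {[], concat (replicate 6 [1, 2]), concat (replicate 6 [2, 1])}"
  by (simp add: weyl_group_def weyl_words_def weyl_word_def affine_gen_def word_check_simps)

lemma weyl_group_dihedral_step:
  assumes "s \<in> {1, 2}" and "M \<in> weyl_group"
  shows "G2_weq ([s] @ weyl_word M) (weyl_word (mat2_mult (fst (affine_gen s)) M))"
proof (rule G2_weq_if_append_rev_trivial)
  let ?w = "([s] @ weyl_word M) @ rev (weyl_word (mat2_mult (fst (affine_gen s)) M))"
  have "G2_weq (free_reduce ?w) []"
    using free_reduce_dihedral_step assms G2_weq_braid_word[of 1 2] G2_weq_braid_word[of 2 1]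
    by (auto simp: G2_gens_def G2_weq.refl doubleton_eq_iff)
  then show "G2_weq ?w []"
    using G2_weq_free_reduce G2_weq.trans by blast
  show "set (weyl_word (mat2_mult (fst (affine_gen s)) M)) \<subseteq> G2_gens"
    using weyl_word_in_G2_words G2_words_iff by blast
qed

lemma weyl_group_mult_inv: "P \<in> weyl_group \<Longrightarrow> mat2_mult P (mat2_inv P) = mat2_id"
  by (drule weyl_group_cases) (auto simp: mat2_id_def Let_def)

lemma weyl_group_left_inv:
  assumes "P \<in> weyl_group" and "mat2_mult Q P = mat2_id"
  shows "Q = mat2_inv P"
proof -
  have "Q = mat2_mult (mat2_mult Q P) (mat2_inv P)"
    using weyl_group_mult_inv[OF assms(1)] by (simp add: mat2_mult_assoc)
  then show ?thesis
    using assms(2) by simp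
qed

(* Distinct commuting involutions of the dihedral group are -1 and a reflection, or two orthogonal
   reflections, in a long and in a short root; in neither case are they conjugate. *)
lemma weyl_group_commuting_conj_involution_eq:
  assumes "P \<in> weyl_group" and "A \<in> weyl_group" and "mat2_mult A A = mat2_id" and "A \<noteq> mat2_id"
    and "B = mat2_mult (mat2_mult P A) (mat2_inv P)" and "mat2_mult A B = mat2_mult B A"
  shows "B = A"
proof -
  have "\<forall>P\<in>weyl_group. \<forall>A\<in>weyl_group. let B = mat2_mult (mat2_mult P A) (mat2_inv P) in
      mat2_mult A A = mat2_id \<longrightarrow> A \<noteq> mat2_id \<longrightarrow> mat2_mult A B = mat2_mult B A \<longrightarrow> B = A"
    by (simp add: weyl_group_def weyl_words_def mat2_id_def Let_def)
  then show ?thesis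
    using assms by (simp add: Let_def)
qed

section \<open>Translations and the normal form\<close>

(* Words acting as the unit translations, see affine_rep_tau. *)
definition tau1 :: "nat list set" where
  "tau1 = G2_cls [3, 2, 1, 2, 1, 2]"

definition tau2 :: "nat list set" where
  "tau2 = G2_cls [1, 2, 3, 2, 1, 2]"

definition G2_transl :: "vec2 \<Rightarrow> nat list set" where
  "G2_transl v = tau1 [^]\<^bsub>affine_G2\<^esub> fst v \<cdot> tau2 [^]\<^bsub>affine_G2\<^esub> snd v"

lemma tau_in_carrier [simp]: "tau1 \<in> carrier affine_G2" "tau2 \<in> carrier affine_G2"
  by (simp_all add: tau1_def tau2_def G2_cls_in_carrier G2_words_iff G2_gens_def)

lemma G2_transl_in_carrier [simp]: "G2_transl v \<in> carrier affine_G2"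
  by (simp add: G2_transl_def)

lemma tau1_tau2_commute: "tau1 \<cdot> tau2 = tau2 \<cdot> tau1"
proof -
  have "G2_weq ([3, 2, 1, 2, 1, 2] @ [1, 2, 3, 2, 1, 2]) ([1, 2, 3, 2, 1, 2] @ [3, 2, 1, 2, 1, 2])"
    by (rule G2_weq_by_moves[of
          "[Insert_square 7 2, Insert_square 8 1, Insert_square 9 2, Insert_square 10 1,
            Insert_square 11 2, Insert_square 12 1, Delete_braid 1 2 1, Delete_square 6 2,
            Delete_square 9 2, Delete_square 8 1, Delete_square 7 2, Insert_square 7 1,
            Insert_square 8 3, Delete_braid 5 1 3, Delete_square 6 1, Insert_square 7 3,
            Insert_square 8 2, Insert_square 9 3, Delete_braid 4 2 3, Delete_square 6 3,
            Delete_square 5 2, Insert_square 5 1, Insert_square 6 3, Delete_braid 3 1 3,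
            Delete_square 4 1, Insert_square 2 3, Insert_square 3 1, Delete_braid 0 3 1,
            Insert_square 4 2, Insert_square 5 3, Insert_square 6 2, Delete_braid 1 3 2]"])
      (simp add: word_check_simps)+
  then show ?thesis
    by (simp add: tau1_def tau2_def mult_affine_G2 G2_words_iff G2_gens_def G2_cls_eqI)
qed

lemma G2_transl_add:
  "G2_transl u \<cdot> G2_transl v = G2_transl (u + v)"
proof -
  have "G2_transl u \<cdot> G2_transl v =
      tau1 [^]\<^bsub>affine_G2\<^esub> fst u \<cdot>
      (tau2 [^]\<^bsub>affine_G2\<^esub> snd u \<cdot> tau1 [^]\<^bsub>affine_G2\<^esub> fst v) \<cdot>
      tau2 [^]\<^bsub>affine_G2\<^esub> snd v"
    by (simp add: G2_transl_def affine_G2.m_assoc)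
  also have "\<dots> = (tau1 [^]\<^bsub>affine_G2\<^esub> fst u \<cdot> tau1 [^]\<^bsub>affine_G2\<^esub> fst v) \<cdot>
      (tau2 [^]\<^bsub>affine_G2\<^esub> snd u \<cdot> tau2 [^]\<^bsub>affine_G2\<^esub> snd v)"
    using affine_G2.int_pow_commute[OF tau1_tau2_commute [symmetric]] by (simp add: affine_G2.m_assoc)
  also have "\<dots> = G2_transl (u + v)"
    by (simp add: G2_transl_def affine_G2.int_pow_mult)
  finally show ?thesis .
qed

lemma G2_transl_int_pow:
  "G2_transl v [^]\<^bsub>affine_G2\<^esub> (k::int) = G2_transl (fst v * k, snd v * k)"
  unfolding G2_transl_def
  using affine_G2.int_pow_mult_distrib[OF affine_G2.int_pow_commute[OF tau1_tau2_commute]]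
  by (simp add: affine_G2.int_pow_pow)

lemma G2_transl_words:
  "G2_transl (1, 0) = G2_cls [3, 2, 1, 2, 1, 2]"
  "G2_transl (1, -1) = G2_cls ([3, 2, 1, 2, 1, 2] @ rev [1, 2, 3, 2, 1, 2])"
  "G2_transl (0, -1) = G2_cls (rev [1, 2, 3, 2, 1, 2])"
  by (simp_all add: G2_transl_def tau1_def tau2_def affine_G2.int_pow_neg inv_affine_G2 mult_affine_G2
      G2_words_iff G2_gens_def G2_cls_in_carrier)

lemma G2_cls_sandwich:
  "s \<in> G2_gens \<Longrightarrow> u \<in> G2_words \<Longrightarrow>
   G2_cls [s] \<cdot> G2_cls u \<cdot> G2_cls [s] = G2_cls ([s] @ u @ [s])"
  by (simp add: mult_affine_G2 G2_words_iff)

lemma gen12_conj_tau: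
  "G2_cls [1] \<cdot> tau1 \<cdot> G2_cls [1] = G2_transl (1, 0)"
  "G2_cls [1] \<cdot> tau2 \<cdot> G2_cls [1] = G2_transl (1, -1)"
  "G2_cls [2] \<cdot> tau1 \<cdot> G2_cls [2] = G2_transl (1, -1)"
  "G2_cls [2] \<cdot> tau2 \<cdot> G2_cls [2] = G2_transl (0, -1)"
proof -
  have "G2_weq ([1] @ [3, 2, 1, 2, 1, 2] @ [1]) [3, 2, 1, 2, 1, 2]"
    by (rule G2_weq_by_moves[of
          "[Insert_square 2 1, Insert_square 3 3, Delete_braid 0 1 3, Insert_square 7 1,
            Insert_square 8 2, Insert_square 9 1, Insert_square 10 2, Insert_square 11 1,
            Insert_square 12 2, Delete_braid 1 1 2]"])
      (simp add: word_check_simps)+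
  moreover have "G2_weq ([1] @ [1, 2, 3, 2, 1, 2] @ [1]) ([3, 2, 1, 2, 1, 2] @ rev [1, 2, 3, 2, 1, 2])"
    by (rule G2_weq_by_moves[of
          "[Delete_square 0 1, Delete_square 5 1, Delete_square 4 2, Insert_square 3 3,
            Insert_square 4 2, Insert_square 5 3, Delete_braid 0 2 3, Insert_square 4 3,
            Insert_square 5 1, Delete_braid 2 3 1]"])
      (simp add: word_check_simps)+
  moreover have "G2_weq ([2] @ [3, 2, 1, 2, 1, 2] @ [2]) ([3, 2, 1, 2, 1, 2] @ rev [1, 2, 3, 2, 1, 2])"
    by (rule G2_weq_by_moves[of
          "[Delete_square 6 2, Delete_square 5 1, Delete_square 4 2, Insert_square 3 3,
            Insert_square 4 2, Insert_square 5 3, Delete_braid 0 2 3, Insert_square 4 3,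
            Insert_square 5 1, Delete_braid 2 3 1]"])
      (simp add: word_check_simps)+
  moreover have "G2_weq ([2] @ [1, 2, 3, 2, 1, 2] @ [2]) (rev [1, 2, 3, 2, 1, 2])"
    by (rule G2_weq_by_moves[of "[]"]) (simp add: word_check_simps)+
  ultimately show
    "G2_cls [1] \<cdot> tau1 \<cdot> G2_cls [1] = G2_transl (1, 0)"
    "G2_cls [1] \<cdot> tau2 \<cdot> G2_cls [1] = G2_transl (1, -1)"
    "G2_cls [2] \<cdot> tau1 \<cdot> G2_cls [2] = G2_transl (1, -1)"
    "G2_cls [2] \<cdot> tau2 \<cdot> G2_cls [2] = G2_transl (0, -1)"
    by (simp_all add: tau1_def tau2_def G2_transl_words G2_cls_sandwich G2_words_iff G2_gens_def G2_cls_eqI)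
qed

lemma gen12_conj_G2_transl:
  assumes "s \<in> {1, 2}"
  shows "G2_cls [s] \<cdot> G2_transl v \<cdot> G2_cls [s] =
    G2_transl (mat2_apply (fst (affine_gen s)) v)"
proof -
  let ?r = "G2_cls [s]"
  have r: "?r \<in> carrier affine_G2" "inv\<^bsub>affine_G2\<^esub> ?r = ?r"
    using assms by (auto simp: G2_cls_in_carrier inv_affine_G2 G2_words_iff G2_gens_def)
  have "?r \<cdot> G2_transl v \<cdot> inv\<^bsub>affine_G2\<^esub> ?r =
      (?r \<cdot> tau1 [^]\<^bsub>affine_G2\<^esub> fst v \<cdot> inv\<^bsub>affine_G2\<^esub> ?r) \<cdot>
      (?r \<cdot> tau2 [^]\<^bsub>affine_G2\<^esub> snd v \<cdot> inv\<^bsub>affine_G2\<^esub> ?r)"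
    using r(1) by (simp add: G2_transl_def affine_G2.m_assoc affine_G2.inv_mult_cancel_left)
  also have "\<dots> = (?r \<cdot> tau1 \<cdot> inv\<^bsub>affine_G2\<^esub> ?r) [^]\<^bsub>affine_G2\<^esub> fst v \<cdot>
      (?r \<cdot> tau2 \<cdot> inv\<^bsub>affine_G2\<^esub> ?r) [^]\<^bsub>affine_G2\<^esub> snd v"
    using r(1) by (simp add: affine_G2.conj_int_pow)
  also have "\<dots> = G2_transl (mat2_apply (fst (affine_gen s)) v)"
    using assms r(2) \<comment> \<open>One_nat_def would turn G2_cls [1] into G2_cls [Suc 0]\<close>
    by (cases v) (elim insertE; simp add: gen12_conj_tau affine_gen_def G2_transl_int_pow
        G2_transl_add algebra_simps del: One_nat_def)
  finally show ?thesis
    using r(2) by simp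
qed

lemma G2_cls_3_decomp: "G2_cls [3] = tau1 \<cdot> G2_cls [2, 1, 2, 1, 2]"
proof -
  have "G2_weq [3] ([3, 2, 1, 2, 1, 2] @ [2, 1, 2, 1, 2])"
    by (rule G2_weq_by_moves[of "[]"]) (simp add: word_check_simps)+
  then show ?thesis
    by (simp add: tau1_def mult_affine_G2 G2_words_iff G2_gens_def G2_cls_eqI)
qed

lemma affine_gen_3_decomp: "affine_gen 3 = aff2_comp (aff2_transl (1, 0)) (affine_word [2, 1, 2, 1, 2])"
  by (simp add: affine_gen_def aff2_id_def aff2_transl_def mat2_id_def)

definition normal_form :: "aff2 \<Rightarrow> nat list set" where
  "normal_form X = G2_transl (snd X) \<cdot> G2_cls (weyl_word (fst X))"

lemma normal_form_in_carrier [simp]: "normal_form X \<in> carrier affine_G2"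
  by (simp add: normal_form_def G2_cls_in_carrier weyl_word_in_G2_words)

lemma transl_mult_normal_form:
  "G2_transl v \<cdot> normal_form X = normal_form (aff2_comp (aff2_transl v) X)"
  by (cases X) (simp add: normal_form_def aff2_transl_def affine_G2.m_assoc [symmetric] G2_transl_add
      G2_cls_in_carrier weyl_word_in_G2_words add.commute)

lemma snd_affine_gen12: "s \<in> {1, 2} \<Longrightarrow> snd (affine_gen s) = 0"
  by (auto simp: affine_gen_def zero_prod_def)

lemma gen12_mult_normal_form:
  assumes "s \<in> {1, 2}" and "fst X \<in> weyl_group"
  shows "G2_cls [s] \<cdot> normal_form X = normal_form (aff2_comp (affine_gen s) X)"
proof -
  obtain M u where X: "X = (M, u)"
    by (cases X)
  let ?r = "G2_cls [s]" and ?L = "fst (affine_gen s)"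
  have s: "[s] \<in> G2_words"
    using assms(1) by (auto simp: G2_words_iff G2_gens_def)
  have "?r \<cdot> ?r = \<one>\<^bsub>affine_G2\<^esub>"
    using s G2_weq.square[of s "[]" "[]"] by (simp add: mult_affine_G2 one_affine_G2 G2_cls_eqI G2_words_iff)
  then have rr: "?r \<cdot> (?r \<cdot> z) = z" if "z \<in> carrier affine_G2" for z
    using that s by (simp add: affine_G2.m_assoc [symmetric] G2_cls_in_carrier)
  have "?r \<cdot> normal_form X =
      (?r \<cdot> G2_transl u \<cdot> ?r) \<cdot> (?r \<cdot> G2_cls (weyl_word M))"
    using s by (simp add: normal_form_def X affine_G2.m_assoc rr G2_cls_in_carrier weyl_word_in_G2_words)
  also have "\<dots> = G2_transl (mat2_apply ?L u) \<cdot> G2_cls (weyl_word (mat2_mult ?L M))"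
    using assms X s weyl_group_dihedral_step[of s M]
    by (simp add: gen12_conj_G2_transl mult_affine_G2 weyl_word_in_G2_words G2_cls_eqI)
  also have "\<dots> = normal_form (aff2_comp (affine_gen s) X)"
    using snd_affine_gen12[OF assms(1)] X by (cases "affine_gen s") (simp add: normal_form_def)
  finally show ?thesis .
qed

lemma word12_mult_normal_form:
  "set u \<subseteq> {1, 2} \<Longrightarrow> fst X \<in> weyl_group \<Longrightarrow>
   G2_cls u \<cdot> normal_form X = normal_form (aff2_comp (affine_word u) X)"
proof (induction u)
  case Nil
  then show ?case
    by (simp add: one_affine_G2 [symmetric])
next
  case (Cons s u)
  have u: "u \<in> G2_words" "[s] \<in> G2_words"
    using Cons.prems by (auto simp: G2_words_iff G2_gens_def)
  have "fst (aff2_comp (affine_word u) X) \<in> weyl_group"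
    using Cons.prems u weyl_group_mult_word by (simp add: fst_aff2_comp G2_words_iff)
  moreover have "G2_cls (s # u) = G2_cls [s] \<cdot> G2_cls u"
    using u by (simp add: mult_affine_G2)
  ultimately show ?case
    using Cons u
    by (simp add: affine_G2.m_assoc G2_cls_in_carrier gen12_mult_normal_form aff2_comp_assoc)
qed

lemma gen_mult_normal_form:
  assumes "s \<in> G2_gens" and "fst X \<in> weyl_group"
  shows "G2_cls [s] \<cdot> normal_form X = normal_form (aff2_comp (affine_gen s) X)"
proof (cases "s = 3")
  case True
  have "G2_cls [s] \<cdot> normal_form X =
      G2_transl (1, 0) \<cdot> (G2_cls [2, 1, 2, 1, 2] \<cdot> normal_form X)"
    using True by (simp add: G2_cls_3_decomp G2_transl_words tau1_def affine_G2.m_assoc G2_cls_in_carrier G2_words_iff G2_gens_def)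
  also have "\<dots> = normal_form (aff2_comp (affine_gen s) X)"
    using True assms(2)
    by (simp add: word12_mult_normal_form transl_mult_normal_form affine_gen_3_decomp aff2_comp_assoc)
  finally show ?thesis .
next
  case False
  with assms show ?thesis
    by (simp add: gen12_mult_normal_form G2_gens_def)
qed

lemma G2_cls_normal_form: "u \<in> G2_words \<Longrightarrow> G2_cls u = normal_form (affine_word u)"
proof (induction u)
  case Nil
  have "weyl_word mat2_id = []"
    by (simp add: weyl_word_def weyl_words_def mat2_id_def)
  then show ?case
    by (simp add: normal_form_def aff2_id_def aff2_transl_def G2_transl_def one_affine_G2 [symmetric])
next
  case (Cons s u)
  then have "s \<in> G2_gens" "set u \<subseteq> G2_gens"
    by (simp_all add: G2_words_iff)
  then show ?case
    using Cons mult_affine_G2[of "[s]" u]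
    by (simp add: G2_words_iff gen_mult_normal_form affine_word_in_weyl_group)
qed

lemma affine_rep_inj:
  assumes "x \<in> carrier affine_G2" and "y \<in> carrier affine_G2" and "affine_rep x = affine_rep y"
  shows "x = y"
proof -
  have "z = normal_form (affine_rep z)" if z: "z \<in> carrier affine_G2" for z
  proof -
    obtain u where u: "u \<in> G2_words" "z = G2_cls u"
      using z by (auto simp: carrier_affine_G2)
    then have "affine_rep z = affine_word u"
      by (simp add: affine_rep_G2_cls)
    then show ?thesis
      using u G2_cls_normal_form by simp
  qed
  then show ?thesis
    using assms by metis
qed

section \<open>Commuting involutions\<close>

lemma aff2_involution_eq_id:
  assumes "aff2_comp X X = aff2_id" and "fst X = mat2_id"
  shows "X = aff2_id"
  using assms by (cases X) (auto simp: aff2_id_def aff2_transl_def)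

lemma aff2_commuting_involutions_eq:
  assumes "fst X = fst Y" and "aff2_comp X X = aff2_id" and "aff2_comp Y Y = aff2_id"
    and "aff2_comp X Y = aff2_comp Y X"
  shows "X = Y"
  using assms
  by (cases X; cases Y; cases "fst X" rule: prod_cases4)
    (auto simp: aff2_id_def aff2_transl_def mat2_id_def; linarith)

lemma aff2_conj_transl:
  "aff2_comp (aff2_comp (aff2_transl e) X) (aff2_transl (- e)) =
   (fst X, snd X + e - mat2_apply (fst X) e)"
  by (cases X; cases "fst X" rule: prod_cases4; cases e) (simp add: aff2_transl_def)

lemma affine_rep_tau:
  "affine_rep tau1 = aff2_transl (1, 0)" "affine_rep tau2 = aff2_transl (0, 1)"
  "affine_rep (inv\<^bsub>affine_G2\<^esub> tau1) = aff2_transl (- (1, 0))"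
  "affine_rep (inv\<^bsub>affine_G2\<^esub> tau2) = aff2_transl (- (0, 1))"
  by (simp_all add: tau1_def tau2_def inv_affine_G2 affine_rep_G2_cls G2_words_iff G2_gens_def
      affine_gen_def aff2_id_def aff2_transl_def mat2_id_def)

lemma affine_rep_inv:
  assumes "g \<in> carrier affine_G2"
  shows "fst (affine_rep (inv\<^bsub>affine_G2\<^esub> g)) = mat2_inv (fst (affine_rep g))"
proof (rule weyl_group_left_inv)
  show "fst (affine_rep g) \<in> weyl_group"
    using assms by (rule affine_rep_in_weyl_group)
  have "aff2_comp (affine_rep (inv\<^bsub>affine_G2\<^esub> g)) (affine_rep g) = aff2_id"
    using assms by (simp add: affine_rep_mult [symmetric] affine_rep_one)
  from arg_cong[OF this, of fst]
  show "mat2_mult (fst (affine_rep (inv\<^bsub>affine_G2\<^esub> g))) (fst (affine_rep g)) = mat2_id"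
    by (simp add: fst_aff2_comp)
qed

lemma affine_rep_involution:
  assumes "involution affine_G2 x"
  shows "aff2_comp (affine_rep x) (affine_rep x) = aff2_id" and "fst (affine_rep x) \<noteq> mat2_id"
proof -
  have x: "x \<in> carrier affine_G2" "x \<noteq> \<one>\<^bsub>affine_G2\<^esub>" "x \<cdot> x = \<one>\<^bsub>affine_G2\<^esub>"
    using assms by (auto simp: involution_def)
  then show sq: "aff2_comp (affine_rep x) (affine_rep x) = aff2_id"
    by (simp add: affine_rep_mult [symmetric] affine_rep_one)
  show "fst (affine_rep x) \<noteq> mat2_id"
  proof
    assume "fst (affine_rep x) = mat2_id"
    then have "affine_rep x = affine_rep \<one>\<^bsub>affine_G2\<^esub>"
      using aff2_involution_eq_id[OF sq] by (simp add: affine_rep_one)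
    then show False
      using x affine_rep_inj by auto
  qed
qed

lemma no_cig_edge_affine_G2:
  assumes "involution affine_G2 t"
  shows "\<not> cig_edge affine_G2 (conj_class affine_G2 t) a b"
proof
  assume "cig_edge affine_G2 (conj_class affine_G2 t) a b"
  then have ab: "a \<in> conj_class affine_G2 t" "b \<in> conj_class affine_G2 t" "a \<noteq> b"
    "a \<cdot> b = b \<cdot> a"
    by (auto simp: cig_edge_def)
  have inv: "involution affine_G2 a" "involution affine_G2 b"
    using ab assms affine_G2.involution_conj_class by blast+
  then have carr: "a \<in> carrier affine_G2" "b \<in> carrier affine_G2"
    by (simp_all add: involution_def)
  obtain k where k: "k \<in> carrier affine_G2" "b = k \<cdot> a \<cdot> inv\<^bsub>affine_G2\<^esub> k"
    using affine_G2.conj_class_conj[OF ab(1,2)] assms by (auto simp: involution_def)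
  let ?A = "affine_rep a" and ?B = "affine_rep b" and ?P = "fst (affine_rep k)"
  have conj: "fst ?B = mat2_mult (mat2_mult ?P (fst ?A)) (mat2_inv ?P)"
    using k carr by (simp add: affine_rep_mult affine_rep_inv fst_aff2_comp)
  have comm: "aff2_comp ?A ?B = aff2_comp ?B ?A"
    using ab(4) carr by (simp add: affine_rep_mult [symmetric])
  have "fst ?A \<in> weyl_group" "?P \<in> weyl_group"
    using carr k by (simp_all add: affine_rep_in_weyl_group)
  moreover have "mat2_mult (fst ?A) (fst ?A) = mat2_id" "fst ?A \<noteq> mat2_id"
    using arg_cong[OF affine_rep_involution(1)[OF inv(1)], of fst] affine_rep_involution(2)[OF inv(1)]
    by (simp_all add: fst_aff2_comp)
  ultimately have "fst ?B = fst ?A"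
    using weyl_group_commuting_conj_involution_eq conj arg_cong[OF comm, of fst]
    by (simp add: fst_aff2_comp)
  then have "?A = ?B"
    using aff2_commuting_involutions_eq affine_rep_involution(1) inv comm by metis
  then show False
    using affine_rep_inj carr ab(3) by blast
qed

lemma conj_class_affine_G2_nontrivial:
  assumes "involution affine_G2 t"
  obtains t' where "t' \<in> conj_class affine_G2 t" and "t' \<noteq> t"
proof -
  have t: "t \<in> carrier affine_G2"
    using assms by (simp add: involution_def)
  let ?M = "fst (affine_rep t)"
  obtain \<tau> e where \<tau>: "\<tau> \<in> carrier affine_G2" "affine_rep \<tau> = aff2_transl e"
    "affine_rep (inv\<^bsub>affine_G2\<^esub> \<tau>) = aff2_transl (- e)" and e: "mat2_apply ?M e \<noteq> e"
  proof (cases "mat2_apply ?M (1, 0) = (1, 0)")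
    case True
    have "mat2_apply ?M (0, 1) \<noteq> (0, 1)"
      using True affine_rep_involution(2)[OF assms]
      by (cases ?M rule: prod_cases4) (simp add: mat2_id_def)
    then show ?thesis
      using that[of tau2] by (simp add: affine_rep_tau)
  next
    case False
    then show ?thesis
      using that[of tau1] by (simp add: affine_rep_tau)
  qed
  let ?t' = "\<tau> \<cdot> t \<cdot> inv\<^bsub>affine_G2\<^esub> \<tau>"
  have "affine_rep ?t' = (?M, snd (affine_rep t) + e - mat2_apply ?M e)"
    using \<tau> t by (simp add: affine_rep_mult aff2_conj_transl)
  then have "snd (affine_rep ?t') - snd (affine_rep t) = e - mat2_apply ?M e"
    by simp
  then have "?t' \<noteq> t"
    using e by auto
  moreover have "?t' \<in> conj_class affine_G2 t"
    using \<tau>(1) by (auto simp: conj_class_def)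
  ultimately show ?thesis
    using that by blast
qed

theorem proposition3p2:
  assumes "involution affine_G2 t"
  shows "\<not> cig_connected affine_G2 (conj_class affine_G2 t)"
proof -
  obtain t' where "t' \<in> conj_class affine_G2 t" and "t' \<noteq> t"
    using conj_class_affine_G2_nontrivial[OF assms] .
  moreover have "t \<in> conj_class affine_G2 t"
    using assms by (simp add: affine_G2.conj_class_self involution_def)
  ultimately show ?thesis
    using not_cig_connected_if_no_edges no_cig_edge_affine_G2[OF assms] by metis
qed

end
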